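(* Let $N\ge1$ and consider the MT process with modified absorption time $\tau^*$ and transient set $S^*$ as in the context. The quasi-stationary distribution $\nu^*$ (the unique QSD charging $(N,1)$, which is also the limit $\lim_{t\to\infty}P_{(N,1)}((X_t,Y_t)=(x,y)\mid\tau^*>t)$) is given by $$\nu^*(x,y)=\begin{cases} C_N^{-1} & (x,y)=(N,1),\\[2pt] C_N^{-1}\dfrac{\lambda_0}{\lambda_1-\lambda_0} & (x,y)=(N-1,2),\\[2pt] C_N^{-1}\displaystyle\sum_{\gamma\in\Gamma_{(x,y)}}\frac{\lambda_0}{\lambda_L-\lambda_0}\prod_{j=1}^{L-1}\frac{\rho_j}{\lambda_j-\lambda_0} & \text{otherwise},\end{cases}$$ where, for a path $\gamma=(v_0,\dots,v_L)\in\Gamma_{(x,y)}$ with $v_j=(x_j,y_j)$, $\lambda_0=\rho_0=N$, $\lambda_j=Ny_j$, and $\rho_j=x_jy_j$ if $v_{j+1}-v_j=(-1,1)$, $\rho_j=y_j(N-x_j)$ if $v_{j+1}-v_j=(0,-1)$; here $L=2N-2x-y+1$ (so $\lambda_L=Ny$), and $C_N$ is the normalizing constant making $\sum_{(x,y)\in S^*}\nu^*(x,y)=1$.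
   Context: MT model: population of size $N+1$; $X_t$, $Y_t$ are the numbers of ignorants and spreaders; continuous-time Markov chain on $\{(x,y)\in\mathbb{Z}^2:0\le x\le N,\,0\le y\le N+1-x\}$ with transitions $(X,Y)\to(X-1,Y+1)$ at rate $XY$ and $(X,Y)\to(X,Y-1)$ at rate $Y(N-X)$ (total rate $NY$). Modified transient set $S^*=\{(N,1)\}\cup\{(x,y)\in\mathbb{Z}^2:0\le x\le N,\ 2\le y\le N+1-x\}$; modified absorption time $\tau^*=\inf\{t>0: Y_t\le1,\ X_t\le N-1\}$ (the process is killed upon first return to level $y=1$ after leaving $(N,1)$). A QSD is a probability measure $\nu$ on $S^*$ with $P_\nu((X_t,Y_t)\in A\mid\tau^*>t)=\nu(A)$ for all $t\ge0$, $A\subset S^*$. Paths: with $\mathcal{E}=\{(-1,1),(0,-1)\}$, $\Gamma_{(x,y)}$ is the set of sequences $v_0=(N,1),v_1,\dots,v_L=(x,y)$ of states all lying in $S^*$ with $v_{j+1}-v_j\in\mathcal{E}$ for every $j$; each such path has $N-x$ steps $(-1,1)$ and $N+1-x-y$ steps $(0,-1)$, hence length $L=2N-2x-y+1$. *)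

theory Defs
  imports Complex_Main
begin

text \<open>States are pairs (x,y) of integers: x = number of ignorants, y = number of spreaders.
  Population size N+1.\<close>

definition Sstar :: "nat \<Rightarrow> (int \<times> int) set" where
  "Sstar N = {(int N, 1)} \<union> {(x, y). 0 \<le> x \<and> x \<le> int N \<and> 2 \<le> y \<and> y \<le> int N + 1 - x}"

definition mt_rate :: "nat \<Rightarrow> int \<times> int \<Rightarrow> int \<times> int \<Rightarrow> real" where
  "mt_rate N a b =
     (if b = (fst a - 1, snd a + 1) then real_of_int (fst a * snd a)
      else if b = (fst a, snd a - 1) then real_of_int (snd a * (int N - fst a))
      else 0)"

text \<open>Sub-generator of the chain killed at time tau* (generator restricted to S*);
  the total jump rate out of (x,y) is N y.\<close>
definition Qsub :: "nat \<Rightarrow> int \<times> int \<Rightarrow> int \<times> int \<Rightarrow> real" where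
  "Qsub N a b = (if a = b then - (real N * real_of_int (snd a)) else mt_rate N a b)"

fun Qpow :: "nat \<Rightarrow> nat \<Rightarrow> int \<times> int \<Rightarrow> int \<times> int \<Rightarrow> real" where
  "Qpow N 0 a b = (if a = b then 1 else 0)"
| "Qpow N (Suc k) a b = (\<Sum>c\<in>Sstar N. Qpow N k a c * Qsub N c b)"

text \<open>Ptrans N t a b = P_a((X_t,Y_t) = b, tau* > t) for a, b in S*, i.e. the (a,b) entry of
  the matrix exponential exp(t Q_{S*}) (Kolmogorov semigroup of the killed finite chain).\<close>
definition Ptrans :: "nat \<Rightarrow> real \<Rightarrow> int \<times> int \<Rightarrow> int \<times> int \<Rightarrow> real" where
  "Ptrans N t a b = (\<Sum>k. t ^ k / fact k * Qpow N k a b)"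

definition is_prob_on :: "'a set \<Rightarrow> ('a \<Rightarrow> real) \<Rightarrow> bool" where
  "is_prob_on S \<nu> = ((\<forall>s\<in>S. 0 \<le> \<nu> s) \<and> (\<Sum>s\<in>S. \<nu> s) = 1)"

definition is_QSD :: "nat \<Rightarrow> (int \<times> int \<Rightarrow> real) \<Rightarrow> bool" where
  "is_QSD N \<nu> = (is_prob_on (Sstar N) \<nu> \<and>
     (\<forall>t\<ge>0. \<forall>A\<subseteq>Sstar N.
        (\<Sum>b\<in>A. \<Sum>a\<in>Sstar N. \<nu> a * Ptrans N t a b)
          / (\<Sum>b\<in>Sstar N. \<Sum>a\<in>Sstar N. \<nu> a * Ptrans N t a b)
        = (\<Sum>b\<in>A. \<nu> b)))"

definition mt_step :: "int \<times> int \<Rightarrow> int \<times> int \<Rightarrow> bool" where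
  "mt_step v w = (w = (fst v - 1, snd v + 1) \<or> w = (fst v, snd v - 1))"

definition Gamma :: "nat \<Rightarrow> int \<times> int \<Rightarrow> (int \<times> int) list set" where
  "Gamma N v = {vs. vs \<noteq> [] \<and> hd vs = (int N, 1) \<and> last vs = v \<and> set vs \<subseteq> Sstar N \<and>
       (\<forall>j. Suc j < length vs \<longrightarrow> mt_step (vs ! j) (vs ! Suc j))}"

definition path_lam :: "nat \<Rightarrow> (int \<times> int) list \<Rightarrow> nat \<Rightarrow> real" where
  "path_lam N vs j = (if j = 0 then real N else real N * real_of_int (snd (vs ! j)))"

definition path_rho :: "nat \<Rightarrow> (int \<times> int) list \<Rightarrow> nat \<Rightarrow> real" where
  "path_rho N vs j =
     (if j = 0 then real N
      else if vs ! Suc j = (fst (vs ! j) - 1, snd (vs ! j) + 1)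
      then real_of_int (fst (vs ! j) * snd (vs ! j))
      else real_of_int (snd (vs ! j) * (int N - fst (vs ! j))))"

definition path_weight :: "nat \<Rightarrow> (int \<times> int) list \<Rightarrow> real" where
  "path_weight N vs =
     (let L = length vs - 1 in
      path_lam N vs 0 / (path_lam N vs L - path_lam N vs 0)
      * (\<Prod>j\<in>{1..<L}. path_rho N vs j / (path_lam N vs j - path_lam N vs 0)))"

definition nu_unnorm :: "nat \<Rightarrow> int \<times> int \<Rightarrow> real" where
  "nu_unnorm N v =
     (if v = (int N, 1) then 1
      else if v = (int N - 1, 2) then real N / (2 * real N - real N)
      else (\<Sum>\<gamma>\<in>Gamma N v. path_weight N \<gamma>))"

definition C_N :: "nat \<Rightarrow> real" where
  "C_N N = (\<Sum>v\<in>Sstar N. nu_unnorm N v)"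

definition nu_star :: "nat \<Rightarrow> int \<times> int \<Rightarrow> real" where
  "nu_star N v = nu_unnorm N v / C_N N"

end

theory Submission
  imports Defs
begin

text \<open>
  Every jump lowers the potential 2x + y by one, and (N,1) is the only state of S* of maximal
  potential, so the sub-generator Q of the killed chain is triangular. Nothing enters (N,1), hence
  P_t((N,1),(N,1)) = e^(-N t): a QSD charging (N,1) has normaliser e^(-N t) and is therefore a
  left eigenvector of Q for the eigenvalue -N. In order of decreasing potential, such an
  eigenvector is determined by its value at (N,1) through
  nu(b) (N y_b - N) = sum of nu(a) q(a,b) over the two states a that jump to b,
  and splitting every path at its last step shows that the path sums obey the same recursion.
  The recursion also makes e^(N t) P_t((N,1), b) the solution of a linear ODE whose forcing
  converges by induction on the potential, which gives the Yaglom limit.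
\<close>

section \<open>Exponentials of finite kernels\<close>

fun kernel_pow :: "'a set \<Rightarrow> ('a \<Rightarrow> 'a \<Rightarrow> real) \<Rightarrow> nat \<Rightarrow> 'a \<Rightarrow> 'a \<Rightarrow> real" where
  "kernel_pow S Q 0 a b = (if a = b then 1 else 0)"
| "kernel_pow S Q (Suc k) a b = (\<Sum>c\<in>S. kernel_pow S Q k a c * Q c b)"

definition kernel_exp :: "'a set \<Rightarrow> ('a \<Rightarrow> 'a \<Rightarrow> real) \<Rightarrow> real \<Rightarrow> 'a \<Rightarrow> 'a \<Rightarrow> real" where
  "kernel_exp S Q t a b = (\<Sum>k. t ^ k / fact k * kernel_pow S Q k a b)"

lemma sums_exp_real: "(\<lambda>k. x ^ k / fact k) sums exp (x :: real)"
  using exp_converges[of x] by (simp add: divide_inverse scaleR_conv_of_real mult.commute)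

lemma kernel_pow_abs_le:
  assumes "finite S" "b \<in> S"
  shows "\<bar>kernel_pow S Q k a b\<bar> \<le> (\<Sum>c\<in>S. \<Sum>d\<in>S. \<bar>Q c d\<bar>) ^ k"
  using assms(2)
proof (induction k arbitrary: b)
  case 0
  then show ?case by simp
next
  case (Suc k)
  let ?M = "\<Sum>c\<in>S. \<Sum>d\<in>S. \<bar>Q c d\<bar>"
  have "\<bar>kernel_pow S Q (Suc k) a b\<bar> \<le> (\<Sum>c\<in>S. \<bar>kernel_pow S Q k a c\<bar> * \<bar>Q c b\<bar>)"
    unfolding kernel_pow.simps by (rule order_trans[OF sum_abs]) (simp add: abs_mult)
  also have "\<dots> \<le> (\<Sum>c\<in>S. ?M ^ k * (\<Sum>d\<in>S. \<bar>Q c d\<bar>))"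
    by (intro sum_mono mult_mono Suc.IH member_le_sum) (use assms(1) Suc.prems in \<open>auto intro!: zero_le_power sum_nonneg\<close>)
  also have "\<dots> = ?M ^ Suc k"
    by (subst sum_distrib_left[symmetric]) (simp add: mult.commute)
  finally show ?case .
qed

lemma summable_kernel_exp_series:
  assumes "finite S" "b \<in> S"
  shows "summable (\<lambda>k. kernel_pow S Q k a b / fact k * t ^ k)"
proof (rule summable_comparison_test[OF _ summable_exp])
  let ?M = "\<Sum>c\<in>S. \<Sum>d\<in>S. \<bar>Q c d\<bar>"
  have "\<bar>kernel_pow S Q k a b / fact k * t ^ k\<bar> \<le> inverse (fact k) * (?M * \<bar>t\<bar>) ^ k" for k
    using mult_right_mono[OF kernel_pow_abs_le[OF assms], of "\<bar>t\<bar> ^ k / fact k" Q k a]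
    by (simp add: abs_mult power_abs power_mult_distrib divide_inverse mult_ac)
  then show "\<exists>n0. \<forall>k\<ge>n0. norm (kernel_pow S Q k a b / fact k * t ^ k) \<le> inverse (fact k) * (?M * \<bar>t\<bar>) ^ k"
    by auto
qed

lemma kernel_exp_sums:
  assumes "finite S" "b \<in> S"
  shows "(\<lambda>k. t ^ k / fact k * kernel_pow S Q k a b) sums kernel_exp S Q t a b"
  using summable_kernel_exp_series[OF assms, of Q a t]
  unfolding kernel_exp_def by (simp add: summable_sums mult_ac)

lemma kernel_exp_0: "kernel_exp S Q 0 a b = (if a = b then 1 else 0)"
  unfolding kernel_exp_def using powser_zero[of "\<lambda>k. kernel_pow S Q k a b / fact k"]
  by (simp add: mult_ac)

lemma kernel_exp_has_derivative:
  assumes S: "finite S" and b: "b \<in> S"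
  shows "((\<lambda>t. kernel_exp S Q t a b) has_real_derivative (\<Sum>c\<in>S. kernel_exp S Q t a c * Q c b)) (at t)"
proof -
  define f where "f c k = kernel_pow S Q k a c / fact k" for c k
  have kexp: "kernel_exp S Q t a c = (\<Sum>k. f c k * t ^ k)" for t c
    unfolding kernel_exp_def f_def by (simp add: mult_ac)
  have diffs: "diffs (f b) k = (\<Sum>c\<in>S. f c k * Q c b)" for k
  proof -
    have "diffs (f b) k = kernel_pow S Q (Suc k) a b / fact k"
      unfolding diffs_def f_def by simp
    then show ?thesis
      by (simp add: f_def sum_divide_distrib)
  qed
  have "(\<Sum>k. diffs (f b) k * t ^ k) = (\<Sum>k. \<Sum>c\<in>S. f c k * t ^ k * Q c b)"
    by (simp add: diffs sum_distrib_left sum_distrib_right mult_ac)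
  also have "\<dots> = (\<Sum>c\<in>S. \<Sum>k. f c k * t ^ k * Q c b)"
    unfolding f_def by (intro suminf_sum summable_mult2 summable_kernel_exp_series[OF S])
  also have "\<dots> = (\<Sum>c\<in>S. kernel_exp S Q t a c * Q c b)"
  proof (intro sum.cong refl)
    fix c assume "c \<in> S"
    then show "(\<Sum>k. f c k * t ^ k * Q c b) = kernel_exp S Q t a c * Q c b"
      unfolding kexp f_def by (intro suminf_mult2[symmetric] summable_kernel_exp_series[OF S])
  qed
  finally have derivative_eq: "(\<Sum>k. diffs (f b) k * t ^ k) = (\<Sum>c\<in>S. kernel_exp S Q t a c * Q c b)" .
  have "((\<lambda>t. \<Sum>k. f b k * t ^ k) has_real_derivative (\<Sum>k. diffs (f b) k * t ^ k)) (at t)"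
    by (rule termdiffs_strong_converges_everywhere) (unfold f_def, rule summable_kernel_exp_series[OF S b])
  then show ?thesis
    unfolding derivative_eq kexp .
qed

lemma kernel_pow_left_eigen:
  assumes S: "finite S"
    and eigen: "\<And>b. b \<in> S \<Longrightarrow> (\<Sum>a\<in>S. \<nu> a * Q a b) = \<theta> * \<nu> b"
    and b: "b \<in> S"
  shows "(\<Sum>a\<in>S. \<nu> a * kernel_pow S Q k a b) = \<theta> ^ k * \<nu> b"
  using b
proof (induction k arbitrary: b)
  case 0
  then show ?case by (simp add: S if_distrib cong: if_cong)
next
  case (Suc k)
  have "(\<Sum>a\<in>S. \<nu> a * kernel_pow S Q (Suc k) a b) = (\<Sum>c\<in>S. (\<Sum>a\<in>S. \<nu> a * kernel_pow S Q k a c) * Q c b)"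
    by (simp add: sum_distrib_left sum_distrib_right mult_ac) (rule sum.swap)
  also have "\<dots> = \<theta> ^ k * (\<Sum>c\<in>S. \<nu> c * Q c b)"
    by (simp add: Suc.IH sum_distrib_left mult_ac)
  also have "\<dots> = \<theta> ^ Suc k * \<nu> b"
    by (simp add: eigen Suc.prems)
  finally show ?case .
qed

lemma kernel_exp_left_eigen:
  assumes S: "finite S"
    and eigen: "\<And>b. b \<in> S \<Longrightarrow> (\<Sum>a\<in>S. \<nu> a * Q a b) = \<theta> * \<nu> b"
    and b: "b \<in> S"
  shows "(\<Sum>a\<in>S. \<nu> a * kernel_exp S Q t a b) = exp (\<theta> * t) * \<nu> b"
proof -
  have "(\<lambda>k. \<Sum>a\<in>S. \<nu> a * (t ^ k / fact k * kernel_pow S Q k a b)) sums (\<Sum>a\<in>S. \<nu> a * kernel_exp S Q t a b)"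
    by (intro sums_sum sums_mult kernel_exp_sums S b)
  moreover have "(\<Sum>a\<in>S. \<nu> a * (t ^ k / fact k * kernel_pow S Q k a b)) = \<nu> b * ((\<theta> * t) ^ k / fact k)" for k
  proof -
    have "(\<Sum>a\<in>S. \<nu> a * (t ^ k / fact k * kernel_pow S Q k a b))
        = t ^ k / fact k * (\<Sum>a\<in>S. \<nu> a * kernel_pow S Q k a b)"
      by (simp add: sum_distrib_left mult_ac)
    then show ?thesis
      by (simp add: kernel_pow_left_eigen[OF S eigen b] power_mult_distrib)
  qed
  ultimately have "(\<lambda>k. \<nu> b * ((\<theta> * t) ^ k / fact k)) sums (\<Sum>a\<in>S. \<nu> a * kernel_exp S Q t a b)"
    by simp
  moreover have "(\<lambda>k. \<nu> b * ((\<theta> * t) ^ k / fact k)) sums (\<nu> b * exp (\<theta> * t))"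
    by (intro sums_mult sums_exp_real)
  ultimately show ?thesis
    using sums_unique2 by (simp add: mult.commute)
qed

lemma left_eigen_if_kernel_exp:
  assumes S: "finite S" and b: "b \<in> S"
    and decay: "\<And>t. t \<ge> 0 \<Longrightarrow> (\<Sum>a\<in>S. \<nu> a * kernel_exp S Q t a b) = exp (\<theta> * t) * \<nu> b"
  shows "(\<Sum>a\<in>S. \<nu> a * Q a b) = \<theta> * \<nu> b"
proof -
  have initial_rate: "(\<Sum>c\<in>S. kernel_exp S Q 0 a c * Q c b) = Q a b" if "a \<in> S" for a
  proof -
    have "(\<Sum>c\<in>S. kernel_exp S Q 0 a c * Q c b) = (\<Sum>c\<in>S. if a = c then Q c b else 0)"
      by (intro sum.cong refl) (simp add: kernel_exp_0)
    then show ?thesis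
      using that S by simp
  qed
  have "((\<lambda>t. \<Sum>a\<in>S. \<nu> a * kernel_exp S Q t a b) has_real_derivative
      (\<Sum>a\<in>S. \<nu> a * (\<Sum>c\<in>S. kernel_exp S Q 0 a c * Q c b))) (at 0)"
    by (intro DERIV_sum DERIV_cmult kernel_exp_has_derivative S b)
  then have "((\<lambda>t. \<Sum>a\<in>S. \<nu> a * kernel_exp S Q t a b) has_real_derivative
      (\<Sum>a\<in>S. \<nu> a * Q a b)) (at 0 within {0..})"
    by (simp add: initial_rate has_field_derivative_at_within)
  then have "((\<lambda>t. exp (\<theta> * t) * \<nu> b) has_real_derivative (\<Sum>a\<in>S. \<nu> a * Q a b)) (at 0 within {0..})"
    by (rule has_field_derivative_transform_within[where d = 1]) (simp_all add: decay)
  moreover have "((\<lambda>t. exp (\<theta> * t) * \<nu> b) has_real_derivative \<theta> * \<nu> b) (at 0 within {0..})"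
    by (auto intro!: derivative_eq_intros)
  ultimately show ?thesis
    by (rule has_field_derivative_unique) (simp add: at_within_Ici_at_right)
qed

lemma kernel_exp_no_entry:
  assumes S: "finite S" and s0: "s0 \<in> S"
    and no_entry: "\<And>c. c \<in> S \<Longrightarrow> c \<noteq> s0 \<Longrightarrow> Q c s0 = 0"
  shows "kernel_exp S Q t a s0 = (if a = s0 then exp (Q s0 s0 * t) else 0)"
proof -
  have pow: "kernel_pow S Q k a s0 = (if a = s0 then Q s0 s0 ^ k else 0)" for k
  proof (induction k)
    case (Suc k)
    have "kernel_pow S Q (Suc k) a s0 = kernel_pow S Q k a s0 * Q s0 s0"
      unfolding kernel_pow.simps(2) using no_entry by (subst sum.remove[OF S s0]) simp_all
    then show ?case
      by (simp add: Suc.IH)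
  qed simp
  have "(\<lambda>k. if a = s0 then (Q s0 s0 * t) ^ k / fact k else 0) sums (if a = s0 then exp (Q s0 s0 * t) else 0)"
    by (cases "a = s0") (simp_all add: sums_exp_real)
  moreover have "t ^ k / fact k * kernel_pow S Q k a s0 = (if a = s0 then (Q s0 s0 * t) ^ k / fact k else 0)" for k
    using pow[of k] by (cases "a = s0") (simp_all add: power_mult_distrib)
  then have "(\<lambda>k. if a = s0 then (Q s0 s0 * t) ^ k / fact k else 0) sums kernel_exp S Q t a s0"
    using kernel_exp_sums[OF S s0, of t Q a] by (simp only:)
  ultimately have "(if a = s0 then exp (Q s0 s0 * t) else 0) = kernel_exp S Q t a s0"
    by (rule sums_unique2)
  then show ?thesis
    by (rule sym)
qed

lemma tendsto_linear_ode:
  fixes u H :: "real \<Rightarrow> real"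
  assumes k: "k > 0"
    and ode: "\<And>t. (u has_real_derivative H t - k * u t) (at t)"
    and H: "(H \<longlongrightarrow> h) at_top"
  shows "(u \<longlongrightarrow> h / k) at_top"
proof -
  have exp_deriv: "((\<lambda>t. exp (k * t)) has_real_derivative k * exp (k * t)) (at t)" for t
    by (auto intro!: derivative_eq_intros)
  have scaled_deriv: "((\<lambda>t. exp (k * t) * u t) has_real_derivative exp (k * t) * H t) (at t)" for t
    using DERIV_mult[OF exp_deriv ode, of t] by (simp add: algebra_simps)
  have "((\<lambda>t. H t / k) \<longlongrightarrow> h / k) at_top"
    using H k by (intro tendsto_intros) auto
  then have ratio: "((\<lambda>t. exp (k * t) * H t / (k * exp (k * t))) \<longlongrightarrow> h / k) at_top"
    by simp
  have "((\<lambda>t. exp (k * t) * u t / exp (k * t)) \<longlongrightarrow> h / k) at_top"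
  proof (rule lhospital_at_top_at_top[OF _ _ _ _ ratio])
    show "filterlim (\<lambda>t. exp (k * t)) at_top at_top"
      by (rule filterlim_compose[OF exp_at_top filterlim_tendsto_pos_mult_at_top[OF tendsto_const k filterlim_ident]])
  qed (use k scaled_deriv exp_deriv in simp_all)
  then show ?thesis
    by simp
qed

section \<open>Structure of the modified MT chain\<close>

text \<open>
  In rumour terms the jump (-1,1) turns an ignorant into a spreader and the jump (0,-1) a
  spreader into a stifler.
\<close>

definition spread_pred :: "int \<times> int \<Rightarrow> int \<times> int" where
  "spread_pred b = (fst b + 1, snd b - 1)"

definition stifle_pred :: "int \<times> int \<Rightarrow> int \<times> int" where
  "stifle_pred b = (fst b, snd b + 1)"

definition inflow :: "nat \<Rightarrow> (int \<times> int \<Rightarrow> real) \<Rightarrow> int \<times> int \<Rightarrow> real" where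
  "inflow N f b =
     (if spread_pred b \<in> Sstar N then f (spread_pred b) * mt_rate N (spread_pred b) b else 0)
   + (if stifle_pred b \<in> Sstar N then f (stifle_pred b) * mt_rate N (stifle_pred b) b else 0)"

definition potential :: "int \<times> int \<Rightarrow> int" where
  "potential b = 2 * fst b + snd b"

lemma finite_Sstar: "finite (Sstar N)"
proof (rule finite_subset)
  show "Sstar N \<subseteq> {0..int N} \<times> {0..int N + 1}"
    by (auto simp: Sstar_def)
qed simp

lemma start_in_Sstar: "(int N, 1) \<in> Sstar N"
  by (simp add: Sstar_def)

lemma Sstar_snd_ge_2: "b \<in> Sstar N \<Longrightarrow> b \<noteq> (int N, 1) \<Longrightarrow> 2 \<le> snd b"
  by (auto simp: Sstar_def)

lemma rate_gap_pos:
  "1 \<le> N \<Longrightarrow> b \<in> Sstar N \<Longrightarrow> b \<noteq> (int N, 1) \<Longrightarrow> 0 < real N * real_of_int (snd b) - real N"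
  using Sstar_snd_ge_2[of b N] by (simp add: algebra_simps)

lemma mt_rate_nonneg: "a \<in> Sstar N \<Longrightarrow> 0 \<le> mt_rate N a b"
  by (auto simp: Sstar_def mt_rate_def)

lemma potential_le_start: "b \<in> Sstar N \<Longrightarrow> potential b \<le> 2 * int N + 1"
  by (auto simp: Sstar_def potential_def)

lemma potential_pos: "b \<in> Sstar N \<Longrightarrow> 1 \<le> potential b"
  by (auto simp: Sstar_def potential_def)

lemma mt_step_iff_pred: "mt_step a b \<longleftrightarrow> a = spread_pred b \<or> a = stifle_pred b"
  by (auto simp: mt_step_def spread_pred_def stifle_pred_def)

lemma Ptrans_eq_kernel_exp: "Ptrans N = kernel_exp (Sstar N) (Qsub N)"
proof -
  have "Qpow N k a b = kernel_pow (Sstar N) (Qsub N) k a b" for k a b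
    by (induction k arbitrary: b) simp_all
  then show ?thesis
    by (simp add: fun_eq_iff Ptrans_def kernel_exp_def)
qed

lemma sum_mult_Qsub:
  assumes "b \<in> Sstar N"
  shows "(\<Sum>a\<in>Sstar N. f a * Qsub N a b) = inflow N f b - real N * real_of_int (snd b) * f b"
proof -
  have Qsub_eq: "Qsub N a b = (if a = b then - (real N * real_of_int (snd b)) else 0)
      + (if a = spread_pred b then mt_rate N (spread_pred b) b else 0)
      + (if a = stifle_pred b then mt_rate N (stifle_pred b) b else 0)" for a
    by (cases a; cases b) (auto simp: Qsub_def mt_rate_def spread_pred_def stifle_pred_def)
  have "(\<Sum>a\<in>Sstar N. f a * Qsub N a b) = (\<Sum>a\<in>Sstar N. (if a = b then - (real N * real_of_int (snd b)) * f a else 0)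
      + (if a = spread_pred b then f a * mt_rate N (spread_pred b) b else 0)
      + (if a = stifle_pred b then f a * mt_rate N (stifle_pred b) b else 0))"
    unfolding Qsub_eq by (intro sum.cong refl) (simp add: algebra_simps)
  also have "\<dots> = inflow N f b - real N * real_of_int (snd b) * f b"
    using assms by (simp add: sum.distrib finite_Sstar inflow_def)
  finally show ?thesis .
qed

lemma Ptrans_to_start: "Ptrans N t a (int N, 1) = (if a = (int N, 1) then exp (- real N * t) else 0)"
proof -
  have "Qsub N c (int N, 1) = 0" if "c \<in> Sstar N" "c \<noteq> (int N, 1)" for c
    using that by (auto simp: Qsub_def mt_rate_def Sstar_def)
  then show ?thesis
    unfolding Ptrans_eq_kernel_exp
    by (subst kernel_exp_no_entry[OF finite_Sstar start_in_Sstar]) (simp_all add: Qsub_def)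
qed

lemma inflow_start: "inflow N f (int N, 1) = 0"
  by (auto simp: inflow_def Sstar_def spread_pred_def stifle_pred_def)

lemma inflow_cong:
  "(\<And>a. a \<in> Sstar N \<Longrightarrow> mt_step a b \<Longrightarrow> f a = g a) \<Longrightarrow> inflow N f b = inflow N g b"
  by (simp add: inflow_def mt_step_iff_pred)

lemma inflow_scale: "inflow N (\<lambda>a. c * f a) b = c * inflow N f b"
  by (simp add: inflow_def algebra_simps)

lemma inflow_zero_outside:
  assumes "\<And>a. a \<notin> Sstar N \<Longrightarrow> f a = 0"
  shows "inflow N f b = f (spread_pred b) * mt_rate N (spread_pred b) b + f (stifle_pred b) * mt_rate N (stifle_pred b) b"
  using assms by (simp add: inflow_def)

lemma inflow_nonneg:
  assumes "\<And>a. a \<in> Sstar N \<Longrightarrow> mt_step a b \<Longrightarrow> 0 \<le> f a"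
  shows "0 \<le> inflow N f b"
proof -
  have "spread_pred b \<in> Sstar N \<Longrightarrow> 0 \<le> f (spread_pred b)"
    and "stifle_pred b \<in> Sstar N \<Longrightarrow> 0 \<le> f (stifle_pred b)"
    using assms by (simp_all add: mt_step_iff_pred)
  then show ?thesis
    by (auto simp: inflow_def intro!: add_nonneg_nonneg mult_nonneg_nonneg mt_rate_nonneg)
qed

lemma tendsto_inflow:
  assumes "\<And>a. a \<in> Sstar N \<Longrightarrow> mt_step a b \<Longrightarrow> ((\<lambda>t. f a t) \<longlongrightarrow> g a) F"
  shows "((\<lambda>t. inflow N (\<lambda>a. f a t) b) \<longlongrightarrow> inflow N g b) F"
proof -
  have "spread_pred b \<in> Sstar N \<Longrightarrow> ((\<lambda>t. f (spread_pred b) t) \<longlongrightarrow> g (spread_pred b)) F"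
    and "stifle_pred b \<in> Sstar N \<Longrightarrow> ((\<lambda>t. f (stifle_pred b) t) \<longlongrightarrow> g (stifle_pred b)) F"
    using assms by (simp_all add: mt_step_iff_pred)
  then show ?thesis
    unfolding inflow_def by (auto intro!: tendsto_intros)
qed

lemma Sstar_pred_induct [consumes 1, case_names start step]:
  assumes "b \<in> Sstar N"
    and start: "P (int N, 1)"
    and step: "\<And>b. b \<in> Sstar N \<Longrightarrow> b \<noteq> (int N, 1) \<Longrightarrow>
       (\<And>a. a \<in> Sstar N \<Longrightarrow> mt_step a b \<Longrightarrow> P a) \<Longrightarrow> P b"
  shows "P b"
  using assms(1)
proof (induction "nat (2 * int N + 1 - potential b)" arbitrary: b rule: less_induct)
  case less
  show ?case
  proof (cases "b = (int N, 1)")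
    case False
    show ?thesis
    proof (rule step[OF less.prems False])
      fix a assume a: "a \<in> Sstar N" "mt_step a b"
      then have "potential a = potential b + 1"
        by (auto simp: mt_step_def potential_def)
      then show "P a"
        using less.hyps[OF _ a(1)] potential_le_start[OF a(1)] by simp
    qed
  qed (simp add: start)
qed

section \<open>Path sums\<close>

lemma successively_iff_nth:
  "successively P xs \<longleftrightarrow> (\<forall>j. Suc j < length xs \<longrightarrow> P (xs ! j) (xs ! Suc j))"
proof (induction P xs rule: successively.induct)
  case (3 P x y xs)
  then show ?case
    by (auto simp: nth_Cons split: nat.splits)
qed simp_all

lemma Gamma_conv_successively:
  "Gamma N v = {vs. vs \<noteq> [] \<and> hd vs = (int N, 1) \<and> last vs = v \<and> set vs \<subseteq> Sstar N \<and> successively mt_step vs}"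
  by (simp add: Gamma_def successively_iff_nth)

lemma potential_last:
  "successively mt_step vs \<Longrightarrow> vs \<noteq> [] \<Longrightarrow> potential (last vs) = potential (hd vs) + 1 - int (length vs)"
  by (induction mt_step vs rule: successively.induct) (auto simp: mt_step_def potential_def)

lemma length_Gamma: "\<gamma> \<in> Gamma N v \<Longrightarrow> int (length \<gamma>) = 2 * int N + 2 - potential v"
  using potential_last[of \<gamma>] by (auto simp: Gamma_conv_successively potential_def)

lemma Gamma_notin_Sstar: "v \<notin> Sstar N \<Longrightarrow> Gamma N v = {}"
  by (auto simp: Gamma_conv_successively dest: last_in_set)

lemma finite_Gamma: "finite (Gamma N v)"
proof (rule finite_subset)
  have "length \<gamma> \<le> 2 * N + 1" if \<gamma>: "\<gamma> \<in> Gamma N v" for \<gamma>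
  proof -
    have "v \<in> Sstar N"
      using \<gamma> Gamma_notin_Sstar by blast
    then show ?thesis
      using length_Gamma[OF \<gamma>] potential_pos[of v N] by linarith
  qed
  then show "Gamma N v \<subseteq> {vs. set vs \<subseteq> Sstar N \<and> length vs \<le> 2 * N + 1}"
    by (auto simp: Gamma_conv_successively)
qed (rule finite_lists_length_le[OF finite_Sstar])

lemma Gamma_start: "Gamma N (int N, 1) = {[(int N, 1)]}"
proof
  show "Gamma N (int N, 1) \<subseteq> {[(int N, 1)]}"
  proof
    fix \<gamma> assume \<gamma>: "\<gamma> \<in> Gamma N (int N, 1)"
    then have "length \<gamma> = 1"
      using length_Gamma[OF \<gamma>] by (simp add: potential_def)
    then show "\<gamma> \<in> {[(int N, 1)]}"
      using \<gamma> by (auto simp: Gamma_conv_successively length_Suc_conv)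
  qed
qed (simp add: Gamma_conv_successively start_in_Sstar)

lemma Gamma_snoc:
  assumes b: "b \<in> Sstar N" "b \<noteq> (int N, 1)"
  shows "Gamma N b = (\<lambda>\<gamma>. \<gamma> @ [b]) ` (Gamma N (spread_pred b) \<union> Gamma N (stifle_pred b))"
proof (intro equalityI subsetI)
  fix \<gamma> assume \<gamma>: "\<gamma> \<in> Gamma N b"
  define \<delta> where "\<delta> = butlast \<gamma>"
  have \<gamma>_eq: "\<gamma> = \<delta> @ [b]"
    using \<gamma> append_butlast_last_id[of \<gamma>] by (simp add: Gamma_conv_successively \<delta>_def)
  have "\<delta> \<noteq> []"
    using \<gamma> b(2) by (auto simp: Gamma_conv_successively \<gamma>_eq)
  then have "\<delta> \<in> Gamma N (last \<delta>)" "mt_step (last \<delta>) b"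
    using \<gamma> by (auto simp: Gamma_conv_successively \<gamma>_eq successively_append_iff)
  then show "\<gamma> \<in> (\<lambda>\<gamma>. \<gamma> @ [b]) ` (Gamma N (spread_pred b) \<union> Gamma N (stifle_pred b))"
    unfolding \<gamma>_eq mt_step_iff_pred by auto
next
  fix \<gamma> assume "\<gamma> \<in> (\<lambda>\<gamma>. \<gamma> @ [b]) ` (Gamma N (spread_pred b) \<union> Gamma N (stifle_pred b))"
  then obtain \<delta> where "\<gamma> = \<delta> @ [b]" "\<delta> \<in> Gamma N (last \<delta>)" "mt_step (last \<delta>) b"
    by (auto simp: Gamma_conv_successively mt_step_iff_pred)
  then show "\<gamma> \<in> Gamma N b"
    using b(1) by (auto simp: Gamma_conv_successively successively_append_iff)
qed

lemma path_weight_snoc: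
  assumes "2 \<le> length \<gamma>" "mt_step (last \<gamma>) b"
  shows "path_weight N (\<gamma> @ [b]) = path_weight N \<gamma> * mt_rate N (last \<gamma>) b / (real N * real_of_int (snd b) - real N)"
proof -
  obtain n where n: "length \<gamma> = Suc n" "0 < n"
    using assms(1) by (cases "length \<gamma>") auto
  have last: "\<gamma> ! n = last \<gamma>"
    using n last_conv_nth[of \<gamma>] by (cases \<gamma>) auto
  have lam: "path_lam N (\<gamma> @ [b]) j = path_lam N \<gamma> j" if "j \<le> n" for j
    using that n by (simp add: path_lam_def nth_append)
  have rho: "path_rho N (\<gamma> @ [b]) j = path_rho N \<gamma> j" if "j < n" for j
    using that n by (simp add: path_rho_def nth_append)
  have rho_n: "path_rho N (\<gamma> @ [b]) n = mt_rate N (last \<gamma>) b"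
    using n last assms(2) by (auto simp: path_rho_def nth_append mt_rate_def mt_step_def)
  have lam_end: "path_lam N (\<gamma> @ [b]) (Suc n) = real N * real_of_int (snd b)"
    using n by (simp add: path_lam_def nth_append)
  have prod: "(\<Prod>j\<in>{1..<n}. path_rho N (\<gamma> @ [b]) j / (path_lam N \<gamma> j - real N))
      = (\<Prod>j\<in>{1..<n}. path_rho N \<gamma> j / (path_lam N \<gamma> j - real N))"
    by (intro prod.cong) (simp_all add: rho)
  show ?thesis
    unfolding path_weight_def Let_def using n
    by (simp add: prod.atLeastLessThan_Suc lam rho_n lam_end path_lam_def[of _ _ 0] prod[simplified]
        mult_ac del: prod.op_ivl_Suc)
qed

lemma Gamma_length_ge_2: "\<gamma> \<in> Gamma N a \<Longrightarrow> a \<noteq> (int N, 1) \<Longrightarrow> 2 \<le> length \<gamma>"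
  by (cases \<gamma>) (auto simp: Gamma_conv_successively Suc_le_eq split: if_splits)

definition path_sum :: "nat \<Rightarrow> int \<times> int \<Rightarrow> real" where
  "path_sum N v = (\<Sum>\<gamma>\<in>Gamma N v. path_weight N \<gamma>)"

lemma path_sum_notin_Sstar: "v \<notin> Sstar N \<Longrightarrow> path_sum N v = 0"
  by (simp add: path_sum_def Gamma_notin_Sstar)

text \<open>
  The one-point path [(N,1)] has weight N / 0 = 0 rather than 1, so the recursion fails for
  b = (N-1,2); this is why nu_unnorm treats (N-1,2) separately.
\<close>

lemma path_sum_rec:
  assumes N: "1 \<le> N" and b: "b \<in> Sstar N" "b \<noteq> (int N, 1)" and b_next: "spread_pred b \<noteq> (int N, 1)"
  shows "path_sum N b * (real N * real_of_int (snd b) - real N) = inflow N (path_sum N) b"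
proof -
  let ?gap = "real N * real_of_int (snd b) - real N"
  let ?sp = "spread_pred b" and ?st = "stifle_pred b"
  have stifle_next: "?st \<noteq> (int N, 1)"
    using Sstar_snd_ge_2[OF b] by (auto simp: stifle_pred_def)
  have extend: "(\<Sum>\<gamma>\<in>Gamma N a. path_weight N (\<gamma> @ [b])) = path_sum N a * mt_rate N a b / ?gap"
    if "mt_step a b" "a \<noteq> (int N, 1)" for a
  proof -
    have "(\<Sum>\<gamma>\<in>Gamma N a. path_weight N (\<gamma> @ [b]))
        = (\<Sum>\<gamma>\<in>Gamma N a. path_weight N \<gamma> * mt_rate N a b / ?gap)"
    proof (intro sum.cong refl)
      fix \<gamma> assume \<gamma>: "\<gamma> \<in> Gamma N a"
      then have "last \<gamma> = a" "2 \<le> length \<gamma>"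
        using Gamma_length_ge_2 that(2) by (auto simp: Gamma_conv_successively)
      then show "path_weight N (\<gamma> @ [b]) = path_weight N \<gamma> * mt_rate N a b / ?gap"
        using path_weight_snoc[of \<gamma> b N] that(1) by simp
    qed
    then show ?thesis
      by (simp add: path_sum_def sum_divide_distrib sum_distrib_right)
  qed
  have "path_sum N b = (\<Sum>\<gamma>\<in>Gamma N ?sp \<union> Gamma N ?st. path_weight N (\<gamma> @ [b]))"
    unfolding path_sum_def Gamma_snoc[OF b] by (subst sum.reindex) (auto simp: inj_on_def)
  also have "\<dots> = (\<Sum>\<gamma>\<in>Gamma N ?sp. path_weight N (\<gamma> @ [b]))
      + (\<Sum>\<gamma>\<in>Gamma N ?st. path_weight N (\<gamma> @ [b]))"
    by (intro sum.union_disjoint finite_Gamma)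
      (auto simp: Gamma_conv_successively spread_pred_def stifle_pred_def)
  also have "\<dots> = inflow N (path_sum N) b / ?gap"
    using extend[of ?sp] extend[of ?st] b_next stifle_next
    by (simp add: inflow_zero_outside path_sum_notin_Sstar mt_step_iff_pred add_divide_distrib)
  finally have "path_sum N b = inflow N (path_sum N) b / ?gap" .
  moreover have "?gap \<noteq> 0"
    using rate_gap_pos[OF N b] by linarith
  ultimately show ?thesis
    by (simp add: nonzero_eq_divide_eq)
qed

lemma nu_unnorm_start: "nu_unnorm N (int N, 1) = 1"
  by (simp add: nu_unnorm_def)

lemma nu_unnorm_eq_path_sum:
  assumes N: "1 \<le> N" and v: "v \<noteq> (int N, 1)"
  shows "nu_unnorm N v = path_sum N v"
proof (cases "v = (int N - 1, 2)")
  case True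
  have "(int N - 1, 2) \<in> Sstar N" "(int N - 1, 2) \<noteq> (int N, 1)"
    using N by (auto simp: Sstar_def)
  then have "Gamma N (int N - 1, 2) = {[(int N, 1), (int N - 1, 2)]}"
    using Gamma_snoc[of "(int N - 1, 2)" N] Gamma_notin_Sstar[of "(int N - 1, 3)" N]
    by (simp add: Gamma_start spread_pred_def stifle_pred_def Sstar_def)
  then show ?thesis
    using True v by (simp add: nu_unnorm_def path_sum_def path_weight_def path_lam_def)
next
  case False
  then show ?thesis
    using v by (simp add: nu_unnorm_def path_sum_def)
qed

lemma nu_unnorm_rec:
  assumes N: "1 \<le> N" and b: "b \<in> Sstar N" "b \<noteq> (int N, 1)"
  shows "nu_unnorm N b * (real N * real_of_int (snd b) - real N) = inflow N (nu_unnorm N) b"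
proof (cases "spread_pred b = (int N, 1)")
  case True
  then have "b = (int N - 1, 2)"
    by (auto simp: spread_pred_def prod_eq_iff)
  then show ?thesis
    using N by (simp add: inflow_def nu_unnorm_def spread_pred_def stifle_pred_def Sstar_def mt_rate_def)
next
  case False
  have "inflow N (nu_unnorm N) b = inflow N (path_sum N) b"
  proof (rule inflow_cong)
    fix a assume "a \<in> Sstar N" "mt_step a b"
    then have "a \<noteq> (int N, 1)"
      using False b by (auto simp: mt_step_iff_pred stifle_pred_def Sstar_def)
    then show "nu_unnorm N a = path_sum N a"
      using nu_unnorm_eq_path_sum[OF N] by simp
  qed
  then show ?thesis
    using path_sum_rec[OF N b False] nu_unnorm_eq_path_sum[OF N b(2)] by simp
qed

section \<open>The quasi-stationary distribution\<close>

lemma is_QSD_if_left_eigen: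
  assumes prob: "is_prob_on (Sstar N) \<nu>"
    and eigen: "\<And>b. b \<in> Sstar N \<Longrightarrow> (\<Sum>a\<in>Sstar N. \<nu> a * Qsub N a b) = \<theta> * \<nu> b"
  shows "is_QSD N \<nu>"
  unfolding is_QSD_def
proof (intro conjI prob allI impI)
  fix t :: real and A assume A: "A \<subseteq> Sstar N"
  have decay: "(\<Sum>a\<in>Sstar N. \<nu> a * Ptrans N t a b) = exp (\<theta> * t) * \<nu> b" if "b \<in> Sstar N" for b
    unfolding Ptrans_eq_kernel_exp using finite_Sstar eigen that by (rule kernel_exp_left_eigen)
  then have "(\<Sum>b\<in>A. \<Sum>a\<in>Sstar N. \<nu> a * Ptrans N t a b) = exp (\<theta> * t) * (\<Sum>b\<in>A. \<nu> b)"
    using A by (simp add: sum_distrib_left subset_eq)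
  moreover have "(\<Sum>b\<in>Sstar N. \<Sum>a\<in>Sstar N. \<nu> a * Ptrans N t a b) = exp (\<theta> * t)"
    using decay prob by (simp add: sum_distrib_left[symmetric] is_prob_on_def)
  ultimately show "(\<Sum>b\<in>A. \<Sum>a\<in>Sstar N. \<nu> a * Ptrans N t a b)
      / (\<Sum>b\<in>Sstar N. \<Sum>a\<in>Sstar N. \<nu> a * Ptrans N t a b) = (\<Sum>b\<in>A. \<nu> b)"
    by simp
qed

lemma QSD_left_eigen:
  assumes QSD: "is_QSD N \<mu>" and pos: "0 < \<mu> (int N, 1)" and b: "b \<in> Sstar N"
  shows "(\<Sum>a\<in>Sstar N. \<mu> a * Qsub N a b) = - real N * \<mu> b"
proof -
  define D where "D t = (\<Sum>b\<in>Sstar N. \<Sum>a\<in>Sstar N. \<mu> a * Ptrans N t a b)" for t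
  have conditioned: "(\<Sum>a\<in>Sstar N. \<mu> a * Ptrans N t a b) / D t = \<mu> b" if "0 \<le> t" "b \<in> Sstar N" for t b
  proof -
    have "(\<Sum>b'\<in>{b}. \<Sum>a\<in>Sstar N. \<mu> a * Ptrans N t a b') / D t = (\<Sum>b'\<in>{b}. \<mu> b')"
      using QSD that unfolding is_QSD_def D_def by blast
    then show ?thesis
      by simp
  qed
  have D: "D t = exp (- real N * t)" if "0 \<le> t" for t
  proof -
    have "(\<Sum>a\<in>Sstar N. \<mu> a * Ptrans N t a (int N, 1)) = \<mu> (int N, 1) * exp (- real N * t)"
      by (simp add: Ptrans_to_start if_distrib finite_Sstar start_in_Sstar cong: if_cong)
    then show ?thesis
      using conditioned[OF that start_in_Sstar] pos by (cases "D t = 0") (auto simp: field_simps)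
  qed
  show ?thesis
  proof (rule left_eigen_if_kernel_exp[OF finite_Sstar b])
    fix t :: real assume "0 \<le> t"
    then show "(\<Sum>a\<in>Sstar N. \<mu> a * kernel_exp (Sstar N) (Qsub N) t a b) = exp (- real N * t) * \<mu> b"
      using conditioned[OF _ b] D by (simp add: Ptrans_eq_kernel_exp field_simps)
  qed
qed

lemma nu_unnorm_nonneg:
  assumes N: "1 \<le> N" and "b \<in> Sstar N"
  shows "0 \<le> nu_unnorm N b"
  using assms(2)
proof (induction rule: Sstar_pred_induct)
  case (step b)
  have "0 \<le> inflow N (nu_unnorm N) b"
    using step.IH by (intro inflow_nonneg)
  then show ?case
    using nu_unnorm_rec[OF N step.hyps] rate_gap_pos[OF N step.hyps] by (metis zero_le_mult_iff not_le)
qed (simp add: nu_unnorm_start)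

lemma nu_unnorm_left_eigen:
  assumes N: "1 \<le> N" and b: "b \<in> Sstar N"
  shows "(\<Sum>a\<in>Sstar N. nu_unnorm N a * Qsub N a b) = - real N * nu_unnorm N b"
proof (cases "b = (int N, 1)")
  case True
  then show ?thesis
    using b by (simp add: sum_mult_Qsub inflow_start nu_unnorm_start)
next
  case False
  then show ?thesis
    using nu_unnorm_rec[OF N b False] b by (simp add: sum_mult_Qsub algebra_simps)
qed

lemma left_eigen_unique:
  assumes N: "1 \<le> N"
    and eigen: "\<And>b. b \<in> Sstar N \<Longrightarrow> (\<Sum>a\<in>Sstar N. \<mu> a * Qsub N a b) = - real N * \<mu> b"
    and "b \<in> Sstar N"
  shows "\<mu> b = \<mu> (int N, 1) * nu_unnorm N b"
  using assms(3)
proof (induction rule: Sstar_pred_induct)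
  case (step b)
  let ?gap = "real N * real_of_int (snd b) - real N"
  have "\<mu> b * ?gap = inflow N \<mu> b"
    using eigen[OF step.hyps(1)] step.hyps(1) by (simp add: sum_mult_Qsub algebra_simps)
  also have "\<dots> = inflow N (\<lambda>a. \<mu> (int N, 1) * nu_unnorm N a) b"
    using step.IH by (intro inflow_cong)
  also have "\<dots> = \<mu> (int N, 1) * nu_unnorm N b * ?gap"
    by (simp add: inflow_scale nu_unnorm_rec[OF N step.hyps])
  finally show ?case
    using rate_gap_pos[OF N step.hyps] by (metis mult_right_cancel order_less_irrefl)
qed (simp add: nu_unnorm_start)

lemma C_N_ge_1:
  assumes "1 \<le> N"
  shows "1 \<le> C_N N"
proof -
  have "nu_unnorm N (int N, 1) \<le> C_N N"
    unfolding C_N_def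
    by (rule member_le_sum[OF start_in_Sstar]) (simp_all add: nu_unnorm_nonneg[OF assms] finite_Sstar)
  then show ?thesis
    by (simp add: nu_unnorm_start)
qed

lemma is_prob_on_nu_star: "1 \<le> N \<Longrightarrow> is_prob_on (Sstar N) (nu_star N)"
  using C_N_ge_1[of N] nu_unnorm_nonneg[of N]
  by (simp add: is_prob_on_def nu_star_def sum_divide_distrib[symmetric] C_N_def[symmetric])

lemma is_QSD_nu_star:
  assumes N: "1 \<le> N"
  shows "is_QSD N (nu_star N)"
proof (rule is_QSD_if_left_eigen[OF is_prob_on_nu_star[OF N]])
  fix b assume b: "b \<in> Sstar N"
  have "(\<Sum>a\<in>Sstar N. nu_star N a * Qsub N a b) = (\<Sum>a\<in>Sstar N. nu_unnorm N a * Qsub N a b) / C_N N"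
    by (simp add: nu_star_def sum_divide_distrib)
  then show "(\<Sum>a\<in>Sstar N. nu_star N a * Qsub N a b) = - real N * nu_star N b"
    by (simp add: nu_unnorm_left_eigen[OF N b] nu_star_def)
qed

lemma nu_star_start_pos: "1 \<le> N \<Longrightarrow> 0 < nu_star N (int N, 1)"
  using C_N_ge_1[of N] by (simp add: nu_star_def nu_unnorm_start)

lemma QSD_unique:
  assumes N: "1 \<le> N" and QSD: "is_QSD N \<mu>" and pos: "0 < \<mu> (int N, 1)" and v: "v \<in> Sstar N"
  shows "\<mu> v = nu_star N v"
proof -
  have scaled: "\<mu> b = \<mu> (int N, 1) * nu_unnorm N b" if "b \<in> Sstar N" for b
    using left_eigen_unique[OF N QSD_left_eigen[OF QSD pos] that] .
  have "1 = (\<Sum>b\<in>Sstar N. \<mu> b)"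
    using QSD by (simp add: is_QSD_def is_prob_on_def)
  also have "\<dots> = \<mu> (int N, 1) * C_N N"
    by (simp add: C_N_def sum_distrib_left scaled)
  finally show ?thesis
    using C_N_ge_1[OF N] scaled[OF v] by (simp add: nu_star_def field_simps)
qed

lemma tendsto_scaled_Ptrans:
  assumes N: "1 \<le> N" and "b \<in> Sstar N"
  shows "((\<lambda>t. exp (real N * t) * Ptrans N t (int N, 1) b) \<longlongrightarrow> nu_unnorm N b) at_top"
  using assms(2)
proof (induction rule: Sstar_pred_induct)
  case start
  have "exp (real N * t) * Ptrans N t (int N, 1) (int N, 1) = 1" for t
    by (simp add: Ptrans_to_start exp_minus_inverse)
  then show ?case
    by (simp add: nu_unnorm_start)
next
  case (step b)
  define U where "U a t = exp (real N * t) * Ptrans N t (int N, 1) a" for a t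
  let ?gap = "real N * real_of_int (snd b) - real N"
  have "(U b has_real_derivative inflow N (\<lambda>a. U a t) b - ?gap * U b t) (at t)" for t
  proof -
    have "((\<lambda>t. Ptrans N t (int N, 1) b) has_real_derivative
        inflow N (\<lambda>a. Ptrans N t (int N, 1) a) b - real N * real_of_int (snd b) * Ptrans N t (int N, 1) b) (at t)"
      using kernel_exp_has_derivative[OF finite_Sstar step.hyps(1), of "Qsub N" "(int N, 1)" t]
      by (simp add: Ptrans_eq_kernel_exp sum_mult_Qsub step.hyps(1))
    then show ?thesis
      unfolding U_def[abs_def]
      by (auto intro!: derivative_eq_intros simp: inflow_scale[symmetric] algebra_simps)
  qed
  moreover have "((\<lambda>t. inflow N (\<lambda>a. U a t) b) \<longlongrightarrow> inflow N (nu_unnorm N) b) at_top"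
    using step.IH unfolding U_def by (intro tendsto_inflow)
  ultimately have "(U b \<longlongrightarrow> inflow N (nu_unnorm N) b / ?gap) at_top"
    by (intro tendsto_linear_ode rate_gap_pos[OF N step.hyps])
  moreover have "inflow N (nu_unnorm N) b / ?gap = nu_unnorm N b"
    using nu_unnorm_rec[OF N step.hyps] rate_gap_pos[OF N step.hyps]
    by (metis nonzero_mult_div_cancel_right order_less_irrefl)
  ultimately show ?case
    unfolding U_def by simp
qed

lemma tendsto_conditioned_Ptrans:
  assumes N: "1 \<le> N" and v: "v \<in> Sstar N"
  shows "((\<lambda>t. Ptrans N t (int N, 1) v / (\<Sum>b\<in>Sstar N. Ptrans N t (int N, 1) b)) \<longlongrightarrow> nu_star N v) at_top"
proof -
  define U where "U a t = exp (real N * t) * Ptrans N t (int N, 1) a" for a t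
  have "((\<lambda>t. U v t / (\<Sum>b\<in>Sstar N. U b t)) \<longlongrightarrow> nu_unnorm N v / C_N N) at_top"
    unfolding C_N_def U_def using C_N_ge_1[OF N]
    by (intro tendsto_divide tendsto_sum tendsto_scaled_Ptrans N v) (simp_all add: C_N_def)
  moreover have "U v t / (\<Sum>b\<in>Sstar N. U b t) = Ptrans N t (int N, 1) v / (\<Sum>b\<in>Sstar N. Ptrans N t (int N, 1) b)" for t
    by (simp add: U_def sum_distrib_left[symmetric])
  ultimately show ?thesis
    by (simp add: nu_star_def)
qed

theorem mainTheorem4:
  fixes N :: nat
  assumes "1 \<le> N"
  shows "is_QSD N (nu_star N) \<and> nu_star N (int N, 1) > 0
    \<and> (\<forall>\<mu>. is_QSD N \<mu> \<and> \<mu> (int N, 1) > 0 \<longrightarrow> (\<forall>v\<in>Sstar N. \<mu> v = nu_star N v))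
    \<and> (\<forall>v\<in>Sstar N.
         ((\<lambda>t. Ptrans N t (int N, 1) v / (\<Sum>b\<in>Sstar N. Ptrans N t (int N, 1) b))
            \<longlongrightarrow> nu_star N v) at_top)"
  using is_QSD_nu_star[OF assms] nu_star_start_pos[OF assms] QSD_unique[OF assms]
    tendsto_conditioned_Ptrans[OF assms]
  by blast

end
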